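(* (i) For any $N\in\mathbb{N}$ and $k\in\mathbb{Z}_+$, $$\gamma_N^{-(N-2),k}=2^k\Bigl(\frac N2+k-2\Bigr)_k(N+k-3)_k.$$ (ii) For any $k\in\mathbb{N}$, $\ell_2^k=2^{k-1}((k-1)!)^2$.
   Context: $|x|_N$ is the Euclidean norm on $\mathbb{R}^N$, $\log$ the natural logarithm, $I_N=\{1,\ldots,N\}$, $D_i=\partial_{x_{i_1}}\cdots\partial_{x_{i_k}}$ for $i=(i_1,\ldots,i_k)\in I_N^k$, and $|\nabla_N^k u(x)|_{N^k}=\bigl(\sum_{i\in I_N^k}(D_iu(x))^2\bigr)^{1/2}$ (for $k=0$ this is $|u(x)|$). It is known that for $k\in\mathbb{Z}_+$, $s\in\mathbb{R}$ the function $x\mapsto(|x|_N^{k-s}|\nabla_N^k[|x|_N^s]|_{N^k})^2$ is constant on $\mathbb{R}^N\setminus\{0\}$; its value is denoted $\gamma_N^{s,k}$. For $k\in\mathbb{N}$ the function $x\mapsto(|x|_N^{k}|\nabla_N^k[\log|x|_N]|_{N^k})^2$ is constant on $\mathbb{R}^N\setminus\{0\}$, with value $\ell_N^k$. $(\nu)_k=\prod_{j=0}^{k-1}(\nu-j)$ for $k\in\mathbb{N}$, $(\nu)_0=1$. *)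

theory Defs
  imports "HOL-Analysis.Analysis"
begin

text \<open>Points of R^N are modelled as functions nat => real that vanish at indices >= N.\<close>

definition eucl_norm :: "nat \<Rightarrow> (nat \<Rightarrow> real) \<Rightarrow> real" where
  "eucl_norm N x = sqrt (\<Sum>i<N. (x i)\<^sup>2)"

definition punctured :: "nat \<Rightarrow> (nat \<Rightarrow> real) set" where
  "punctured N = {x. (\<forall>i. N \<le> i \<longrightarrow> x i = 0) \<and> x \<noteq> (\<lambda>_. 0)}"

definition partial :: "nat \<Rightarrow> ((nat \<Rightarrow> real) \<Rightarrow> real) \<Rightarrow> (nat \<Rightarrow> real) \<Rightarrow> real" where
  "partial j u x = deriv (\<lambda>t. u (x(j := t))) (x j)"

fun dpart :: "nat list \<Rightarrow> ((nat \<Rightarrow> real) \<Rightarrow> real) \<Rightarrow> (nat \<Rightarrow> real) \<Rightarrow> real" where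
  "dpart [] u = u"
| "dpart (j # js) u = partial j (dpart js u)"

definition grad_norm :: "nat \<Rightarrow> nat \<Rightarrow> ((nat \<Rightarrow> real) \<Rightarrow> real) \<Rightarrow> (nat \<Rightarrow> real) \<Rightarrow> real" where
  "grad_norm N k u x =
     sqrt (\<Sum>is\<in>{is. length is = k \<and> set is \<subseteq> {..<N}}. (dpart is u x)\<^sup>2)"

text \<open>gamma_N^{s,k}: the constant value of (|x|^{k-s} |nabla^k |x|^s|)^2 on R^N \ {0}.\<close>
definition gamma :: "nat \<Rightarrow> real \<Rightarrow> nat \<Rightarrow> real" where
  "gamma N s k = (THE c. \<forall>x\<in>punctured N.
      (eucl_norm N x powr (real k - s) * grad_norm N k (\<lambda>y. eucl_norm N y powr s) x)\<^sup>2 = c)"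

text \<open>ell_N^k: the constant value of (|x|^k |nabla^k log |x||)^2 on R^N \ {0}.\<close>
definition ell :: "nat \<Rightarrow> nat \<Rightarrow> real" where
  "ell N k = (THE c. \<forall>x\<in>punctured N.
      (eucl_norm N x ^ k * grad_norm N k (\<lambda>y. ln (eucl_norm N y)) x)\<^sup>2 = c)"

text \<open>Falling factorial (nu)_k = prod_{j=0}^{k-1} (nu - j).\<close>
definition falling :: "real \<Rightarrow> nat \<Rightarrow> real" where
  "falling \<nu> k = (\<Prod>j<k. (\<nu> - real j))"

end

theory Submission
  imports Defs
begin

text \<open>If u is harmonic on R^N - {0}, so is every derivative D_i u, and
  Delta (D_i u)^2 = 2 |grad D_i u|^2; summing over i gives |grad^(k+1) u|^2 = Delta |grad^k u|^2 / 2.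
  Hence if |grad^k u|^2 = c |x|^p, the identity Delta |x|^p = p (p + N - 2) |x|^(p-2) yields
  |grad^(k+1) u|^2 = c p (p + N - 2) / 2 |x|^(p-2). Iterating from u = |x|^(2-N) (where p = 4 - 2N)
  and from u = log |x| in the plane (where |grad u|^2 = |x|^(-2)) produces products which are the
  stated falling factorials and factorials.\<close>

lemma eucl_norm_pos:
  assumes "x \<in> punctured N"
  shows "eucl_norm N x > 0"
proof -
  from assms obtain i where "x i \<noteq> 0" and "\<forall>i. N \<le> i \<longrightarrow> x i = 0"
    by (auto simp: punctured_def)
  then have "i < N" and "0 < (x i)\<^sup>2" by (auto simp: not_le[symmetric])
  then have "0 < (\<Sum>i<N. (x i)\<^sup>2)"
    by (meson finite_lessThan lessThan_iff member_le_sum order_less_le_trans zero_le_power2)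
  then show ?thesis by (simp add: eucl_norm_def)
qed

lemma power2_eucl_norm: "(eucl_norm N x)\<^sup>2 = (\<Sum>i<N. (x i)\<^sup>2)"
  by (simp add: eucl_norm_def sum_nonneg)

lemma power2_mult_powr_diff:
  fixes r :: real
  assumes "r > 0"
  shows "r\<^sup>2 * r powr (a - 2) = r powr a"
proof -
  have "r\<^sup>2 = r powr 2" using assms by (simp add: powr_realpow)
  then show ?thesis by (simp add: powr_add[symmetric])
qed

lemma the_const_on_punctured:
  assumes "N \<ge> 1" and "\<forall>x\<in>punctured N. f x = c"
  shows "(THE c. \<forall>x\<in>punctured N. f x = c) = c"
proof -
  have "(\<lambda>i. if i = 0 then 1 else 0) \<in> punctured N"
    using assms(1) by (auto simp: punctured_def fun_eq_iff)
  with assms(2) show ?thesis by (intro the_equality) auto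
qed

lemma has_real_derivative_eucl_norm_upd:
  assumes "j < N" and "eucl_norm N x > 0"
  shows "((\<lambda>t. eucl_norm N (x(j := t))) has_real_derivative x j / eucl_norm N x) (at (x j))"
proof -
  define c where "c = (\<Sum>i\<in>{..<N} - {j}. (x i)\<^sup>2)"
  have "(\<Sum>i<N. ((x(j := t)) i)\<^sup>2) = t\<^sup>2 + c" for t
    using assms(1) unfolding c_def by (subst sum.remove[of _ j]) (auto intro!: sum.cong)
  then have norm_upd: "eucl_norm N (x(j := t)) = sqrt (t\<^sup>2 + c)" for t
    by (simp add: eucl_norm_def)
  then have "eucl_norm N x = sqrt ((x j)\<^sup>2 + c)"
    by (metis fun_upd_triv)
  with assms(2) have "(x j)\<^sup>2 + c > 0" by simp
  then have "((\<lambda>t. sqrt (t\<^sup>2 + c)) has_real_derivative inverse (sqrt ((x j)\<^sup>2 + c)) / 2 * (2 * x j)) (at (x j))"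
    by (auto intro!: derivative_eq_intros)
  with \<open>eucl_norm N x = _\<close> show ?thesis
    unfolding norm_upd by (simp add: field_simps)
qed

text \<open>The functions to be differentiated are built from coordinates, powers of |x| and log |x| by
  sums and products. This class is closed under partial differentiation, so derivatives are computed
  symbolically, and the commutation of partial derivatives becomes a ring identity.\<close>

datatype nexpr = Const real | Coord nat | NormPowr real | LnNorm | Plus nexpr nexpr | Times nexpr nexpr

fun eval_nexpr :: "nat \<Rightarrow> nexpr \<Rightarrow> (nat \<Rightarrow> real) \<Rightarrow> real" where
  "eval_nexpr N (Const c) x = c"
| "eval_nexpr N (Coord i) x = x i"
| "eval_nexpr N (NormPowr q) x = eucl_norm N x powr q"
| "eval_nexpr N LnNorm x = ln (eucl_norm N x)"
| "eval_nexpr N (Plus a b) x = eval_nexpr N a x + eval_nexpr N b x"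
| "eval_nexpr N (Times a b) x = eval_nexpr N a x * eval_nexpr N b x"

fun deriv_nexpr :: "nat \<Rightarrow> nexpr \<Rightarrow> nexpr" where
  "deriv_nexpr j (Const c) = Const 0"
| "deriv_nexpr j (Coord i) = Const (if i = j then 1 else 0)"
| "deriv_nexpr j (NormPowr q) = Times (Const q) (Times (Coord j) (NormPowr (q - 2)))"
| "deriv_nexpr j LnNorm = Times (Coord j) (NormPowr (-2))"
| "deriv_nexpr j (Plus a b) = Plus (deriv_nexpr j a) (deriv_nexpr j b)"
| "deriv_nexpr j (Times a b) = Plus (Times (deriv_nexpr j a) b) (Times a (deriv_nexpr j b))"

lemma has_real_derivative_eval_nexpr_upd:
  assumes "x \<in> punctured N" and "j < N"
  shows "((\<lambda>t. eval_nexpr N e (x(j := t))) has_real_derivative eval_nexpr N (deriv_nexpr j e) x) (at (x j))"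
proof (induction e)
  case (NormPowr q)
  let ?r = "eucl_norm N x"
  have r: "?r > 0" using eucl_norm_pos[OF assms(1)] .
  have "((\<lambda>t. eucl_norm N (x(j := t)) powr q) has_real_derivative
      q * ?r powr (q - 1) * (x j / ?r)) (at (x j))"
    using DERIV_chain2[OF has_real_derivative_powr has_real_derivative_eucl_norm_upd[OF assms(2) r]] r
    by simp
  moreover have "q * ?r powr (q - 1) * (x j / ?r) = q * (x j * ?r powr (q - 2))"
    using r by (simp add: powr_diff field_simps power2_eq_square)
  ultimately show ?case by (simp only: eval_nexpr.simps deriv_nexpr.simps)
next
  case LnNorm
  let ?r = "eucl_norm N x"
  have r: "?r > 0" using eucl_norm_pos[OF assms(1)] .
  have "((\<lambda>t. ln (eucl_norm N (x(j := t)))) has_real_derivative inverse ?r * (x j / ?r)) (at (x j))"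
    using DERIV_chain2[OF DERIV_ln has_real_derivative_eucl_norm_upd[OF assms(2) r]] r by simp
  moreover have "inverse ?r * (x j / ?r) = x j * ?r powr (-2)"
    using r by (simp add: powr_minus field_simps power2_eq_square)
  ultimately show ?case by (simp only: eval_nexpr.simps deriv_nexpr.simps)
next
  case (Times a b)
  have "(\<lambda>i. if i = j then x j else x i) = x" by auto
  with Times show ?case by (auto intro!: derivative_eq_intros)
qed (auto intro!: derivative_eq_intros)

lemma partial_eval_nexpr:
  assumes "x \<in> punctured N" and "j < N"
  shows "partial j (eval_nexpr N e) x = eval_nexpr N (deriv_nexpr j e) x"
  unfolding partial_def using DERIV_imp_deriv[OF has_real_derivative_eval_nexpr_upd[OF assms]] by simp

text \<open>Expressions only agree on the punctured space: at 0 they take the junk values of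
  \<open>0 powr q\<close> and \<open>ln 0\<close>.\<close>

lemma partial_cong_punctured:
  assumes "\<forall>y\<in>punctured N. f y = g y" and "x \<in> punctured N" and "j < N"
  shows "partial j f x = partial j g x"
proof -
  have "x(j := t) \<in> punctured N" if "t \<noteq> 0" for t
    using assms(2,3) that by (auto simp: punctured_def fun_eq_iff split: if_splits)
  moreover have "x(j := x j) \<in> punctured N"
    using assms(2) by simp
  ultimately have upd_punctured: "x(j := t) \<in> punctured N" if "t \<noteq> 0 \<or> t = x j" for t
    using that by blast
  have "eventually (\<lambda>t. t \<noteq> 0 \<or> t = x j) (nhds (x j))"
    by (cases "x j = 0") (auto simp: t1_space_nhds)
  then have "eventually (\<lambda>t. f (x(j := t)) = g (x(j := t))) (nhds (x j))"
    by (rule eventually_mono) (use assms(1) upd_punctured in blast)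
  then show ?thesis
    unfolding partial_def by (rule deriv_cong_ev) simp
qed

lemma eval_deriv_nexpr_cong:
  assumes "\<forall>y\<in>punctured N. eval_nexpr N a y = eval_nexpr N b y" and "x \<in> punctured N" and "j < N"
  shows "eval_nexpr N (deriv_nexpr j a) x = eval_nexpr N (deriv_nexpr j b) x"
  using partial_cong_punctured[OF assms] partial_eval_nexpr[OF assms(2,3)] by metis

lemma eval_deriv_nexpr_commute:
  "eval_nexpr N (deriv_nexpr i (deriv_nexpr j e)) x = eval_nexpr N (deriv_nexpr j (deriv_nexpr i e)) x"
  by (induction e) (auto simp: algebra_simps)

fun derivs_nexpr :: "nat list \<Rightarrow> nexpr \<Rightarrow> nexpr" where
  "derivs_nexpr [] e = e"
| "derivs_nexpr (j # js) e = deriv_nexpr j (derivs_nexpr js e)"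

lemma dpart_eval_nexpr:
  assumes "set js \<subseteq> {..<N}" and "x \<in> punctured N"
  shows "dpart js (eval_nexpr N e) x = eval_nexpr N (derivs_nexpr js e) x"
  using assms
proof (induction js arbitrary: x)
  case (Cons j js)
  then have "partial j (dpart js (eval_nexpr N e)) x = partial j (eval_nexpr N (derivs_nexpr js e)) x"
    by (intro partial_cong_punctured) auto
  with Cons.prems show ?case
    by (simp add: partial_eval_nexpr)
qed simp

definition sum_nexpr :: "nexpr list \<Rightarrow> nexpr" where
  "sum_nexpr es = foldr Plus es (Const 0)"

lemma eval_sum_nexpr: "eval_nexpr N (sum_nexpr es) x = (\<Sum>e\<leftarrow>es. eval_nexpr N e x)"
  by (induction es) (auto simp: sum_nexpr_def)

lemma deriv_sum_nexpr: "deriv_nexpr j (sum_nexpr es) = sum_nexpr (map (deriv_nexpr j) es)"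
  by (induction es) (auto simp: sum_nexpr_def)

definition laplacian_nexpr :: "nat \<Rightarrow> nexpr \<Rightarrow> nexpr" where
  "laplacian_nexpr N e = sum_nexpr (map (\<lambda>j. deriv_nexpr j (deriv_nexpr j e)) [0..<N])"

lemma eval_laplacian_nexpr:
  "eval_nexpr N (laplacian_nexpr N e) x = (\<Sum>j<N. eval_nexpr N (deriv_nexpr j (deriv_nexpr j e)) x)"
  by (simp add: laplacian_nexpr_def eval_sum_nexpr sum_list_distinct_conv_sum_set atLeast0LessThan)

lemma eval_laplacian_nexpr_cong:
  assumes "\<forall>y\<in>punctured N. eval_nexpr N a y = eval_nexpr N b y" and "x \<in> punctured N"
  shows "eval_nexpr N (laplacian_nexpr N a) x = eval_nexpr N (laplacian_nexpr N b) x"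
  unfolding eval_laplacian_nexpr
proof (rule sum.cong)
  fix j assume "j \<in> {..<N}"
  with assms show "eval_nexpr N (deriv_nexpr j (deriv_nexpr j a)) x = eval_nexpr N (deriv_nexpr j (deriv_nexpr j b)) x"
    by (intro eval_deriv_nexpr_cong) (auto intro: eval_deriv_nexpr_cong)
qed simp

definition harmonic_nexpr :: "nat \<Rightarrow> nexpr \<Rightarrow> bool" where
  "harmonic_nexpr N e \<longleftrightarrow> (\<forall>y\<in>punctured N. eval_nexpr N (laplacian_nexpr N e) y = 0)"

lemma harmonic_deriv_nexpr:
  assumes "harmonic_nexpr N e" and "i < N"
  shows "harmonic_nexpr N (deriv_nexpr i e)"
  unfolding harmonic_nexpr_def
proof
  fix y assume y: "y \<in> punctured N"
  have "eval_nexpr N (laplacian_nexpr N (deriv_nexpr i e)) y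
      = (\<Sum>j<N. eval_nexpr N (deriv_nexpr i (deriv_nexpr j (deriv_nexpr j e))) y)"
    unfolding eval_laplacian_nexpr
  proof (rule sum.cong)
    fix j assume "j \<in> {..<N}"
    then have "eval_nexpr N (deriv_nexpr j (deriv_nexpr j (deriv_nexpr i e))) y
        = eval_nexpr N (deriv_nexpr j (deriv_nexpr i (deriv_nexpr j e))) y"
      using y by (intro eval_deriv_nexpr_cong) (auto intro: eval_deriv_nexpr_commute)
    then show "eval_nexpr N (deriv_nexpr j (deriv_nexpr j (deriv_nexpr i e))) y
        = eval_nexpr N (deriv_nexpr i (deriv_nexpr j (deriv_nexpr j e))) y"
      by (simp add: eval_deriv_nexpr_commute)
  qed simp
  also have "\<dots> = eval_nexpr N (deriv_nexpr i (laplacian_nexpr N e)) y"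
    by (simp add: laplacian_nexpr_def deriv_sum_nexpr eval_sum_nexpr o_def
        sum_list_distinct_conv_sum_set atLeast0LessThan)
  also have "\<dots> = eval_nexpr N (deriv_nexpr i (Const 0)) y"
    using assms y by (intro eval_deriv_nexpr_cong) (auto simp: harmonic_nexpr_def)
  finally show "eval_nexpr N (laplacian_nexpr N (deriv_nexpr i e)) y = 0"
    by simp
qed

lemma harmonic_derivs_nexpr:
  "harmonic_nexpr N e \<Longrightarrow> set js \<subseteq> {..<N} \<Longrightarrow> harmonic_nexpr N (derivs_nexpr js e)"
  by (induction js) (auto intro: harmonic_deriv_nexpr)

definition multi_indices :: "nat \<Rightarrow> nat \<Rightarrow> nat list set" where
  "multi_indices N k = {is. length is = k \<and> set is \<subseteq> {..<N}}"

lemma finite_multi_indices: "finite (multi_indices N k)"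
  unfolding multi_indices_def using finite_lists_length_eq[of "{..<N}" k] by (simp add: conj_commute)

lemma multi_indices_0: "multi_indices N 0 = {[]}"
  by (auto simp: multi_indices_def)

lemma sum_multi_indices_Suc:
  "(\<Sum>is\<in>multi_indices N (Suc k). f is) = (\<Sum>j<N. \<Sum>is\<in>multi_indices N k. f (j # is))"
proof -
  have "multi_indices N (Suc k) = (\<lambda>(j, is). j # is) ` ({..<N} \<times> multi_indices N k)"
    by (auto simp: multi_indices_def length_Suc_conv image_iff)
  moreover have "inj_on (\<lambda>(j, is). j # is) ({..<N} \<times> multi_indices N k)"
    by (auto simp: inj_on_def)
  ultimately show ?thesis
    by (auto simp: sum.reindex sum.cartesian_product finite_multi_indices intro!: sum.cong)
qed

lemma eval_sum_nexpr_multi_indices: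
  "eval_nexpr N (sum_nexpr (map f (List.n_lists k [0..<N]))) x = (\<Sum>is\<in>multi_indices N k. eval_nexpr N (f is) x)"
  by (simp add: eval_sum_nexpr sum_list_distinct_conv_sum_set distinct_n_lists set_n_lists
      multi_indices_def atLeast0LessThan o_def)

definition grad_sq_nexpr :: "nat \<Rightarrow> nat \<Rightarrow> nexpr \<Rightarrow> nexpr" where
  "grad_sq_nexpr N k e =
     sum_nexpr (map (\<lambda>is. Times (derivs_nexpr is e) (derivs_nexpr is e)) (List.n_lists k [0..<N]))"

lemma eval_grad_sq_nexpr:
  "eval_nexpr N (grad_sq_nexpr N k e) x = (\<Sum>is\<in>multi_indices N k. (eval_nexpr N (derivs_nexpr is e) x)\<^sup>2)"
  by (simp add: grad_sq_nexpr_def eval_sum_nexpr_multi_indices power2_eq_square)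

lemma eval_grad_sq_nexpr_nonneg: "eval_nexpr N (grad_sq_nexpr N k e) x \<ge> 0"
  unfolding eval_grad_sq_nexpr by (rule sum_nonneg) simp

lemma grad_norm_eval_nexpr:
  assumes "x \<in> punctured N"
  shows "grad_norm N k (eval_nexpr N e) x = sqrt (eval_nexpr N (grad_sq_nexpr N k e) x)"
  unfolding grad_norm_def eval_grad_sq_nexpr multi_indices_def[symmetric]
  using assms by (auto simp: multi_indices_def dpart_eval_nexpr intro!: arg_cong[where f = sqrt] sum.cong)

lemma eval_deriv_deriv_square:
  "eval_nexpr N (deriv_nexpr j (deriv_nexpr j (Times v v))) x
     = 2 * (eval_nexpr N (deriv_nexpr j v) x)\<^sup>2 + 2 * eval_nexpr N v x * eval_nexpr N (deriv_nexpr j (deriv_nexpr j v)) x"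
  by (simp add: algebra_simps power2_eq_square)

lemma eval_grad_sq_nexpr_Suc:
  assumes "harmonic_nexpr N e" and "y \<in> punctured N"
  shows "eval_nexpr N (grad_sq_nexpr N (Suc k) e) y = eval_nexpr N (laplacian_nexpr N (grad_sq_nexpr N k e)) y / 2"
proof -
  let ?D = "\<lambda>is. eval_nexpr N (derivs_nexpr is e) y"
  let ?DD = "\<lambda>j is. eval_nexpr N (deriv_nexpr j (deriv_nexpr j (derivs_nexpr is e))) y"
  have harmonic: "(\<Sum>j<N. ?DD j is) = 0" if "is \<in> multi_indices N k" for "is"
    using harmonic_derivs_nexpr[OF assms(1)] that assms(2)
    by (auto simp: multi_indices_def harmonic_nexpr_def eval_laplacian_nexpr)
  have "eval_nexpr N (laplacian_nexpr N (grad_sq_nexpr N k e)) y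
      = (\<Sum>j<N. \<Sum>is\<in>multi_indices N k. 2 * (?D (j # is))\<^sup>2 + 2 * ?D is * ?DD j is)"
    by (simp add: eval_laplacian_nexpr grad_sq_nexpr_def deriv_sum_nexpr o_def
        eval_sum_nexpr_multi_indices eval_deriv_deriv_square del: eval_nexpr.simps deriv_nexpr.simps)
  also have "\<dots> = 2 * (\<Sum>j<N. \<Sum>is\<in>multi_indices N k. (?D (j # is))\<^sup>2)
      + 2 * (\<Sum>j<N. \<Sum>is\<in>multi_indices N k. ?D is * ?DD j is)"
    by (simp add: sum.distrib sum_distrib_left mult.assoc)
  also have "\<dots> = 2 * (\<Sum>j<N. \<Sum>is\<in>multi_indices N k. (?D (j # is))\<^sup>2)
      + 2 * (\<Sum>is\<in>multi_indices N k. ?D is * (\<Sum>j<N. ?DD j is))"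
    by (subst sum.swap) (simp add: sum_distrib_left)
  also have "\<dots> = 2 * eval_nexpr N (grad_sq_nexpr N (Suc k) e) y"
    by (simp add: harmonic eval_grad_sq_nexpr sum_multi_indices_Suc)
  finally show ?thesis by simp
qed

lemma eval_laplacian_NormPowr:
  assumes "y \<in> punctured N"
  shows "eval_nexpr N (laplacian_nexpr N (NormPowr p)) y = p * (p + real N - 2) * eucl_norm N y powr (p - 2)"
proof -
  let ?r = "eucl_norm N y"
  have "eval_nexpr N (laplacian_nexpr N (NormPowr p)) y
      = (\<Sum>j<N. p * ?r powr (p - 2) + p * (p - 2) * ?r powr (p - 2 - 2) * (y j)\<^sup>2)"
    unfolding eval_laplacian_nexpr by (intro sum.cong) (auto simp: algebra_simps power2_eq_square)
  also have "\<dots> = real N * (p * ?r powr (p - 2)) + p * (p - 2) * (?r\<^sup>2 * ?r powr (p - 2 - 2))"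
    by (simp add: sum.distrib power2_eucl_norm flip: sum_distrib_left)
  also have "\<dots> = p * (p + real N - 2) * ?r powr (p - 2)"
    unfolding power2_mult_powr_diff[OF eucl_norm_pos[OF assms]] by (simp add: algebra_simps)
  finally show ?thesis .
qed

lemma eval_laplacian_scale:
  "eval_nexpr N (laplacian_nexpr N (Times (Const c) e)) y = c * eval_nexpr N (laplacian_nexpr N e) y"
  by (simp add: eval_laplacian_nexpr sum_distrib_left)

lemma harmonic_fundamental_solution: "harmonic_nexpr N (NormPowr (2 - real N))"
  by (simp add: harmonic_nexpr_def eval_laplacian_NormPowr)

lemma harmonic_LnNorm: "harmonic_nexpr 2 LnNorm"
  unfolding harmonic_nexpr_def
proof
  fix y assume y: "y \<in> punctured 2"
  let ?r = "eucl_norm 2 y"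
  have "eval_nexpr 2 (laplacian_nexpr 2 LnNorm) y = (\<Sum>j<2. ?r powr (-2) - 2 * ?r powr (-2 - 2) * (y j)\<^sup>2)"
    unfolding eval_laplacian_nexpr by (intro sum.cong) (auto simp: algebra_simps power2_eq_square)
  also have "\<dots> = 2 * ?r powr (-2) - 2 * (?r\<^sup>2 * ?r powr (-2 - 2))"
    by (simp add: sum_subtractf power2_eucl_norm flip: sum_distrib_left)
  also have "\<dots> = 0"
    unfolding power2_mult_powr_diff[OF eucl_norm_pos[OF y]] by simp
  finally show "eval_nexpr 2 (laplacian_nexpr 2 LnNorm) y = 0" .
qed

lemma eval_grad_sq_nexpr_Suc_powr:
  assumes "harmonic_nexpr N e"
    and "\<forall>y\<in>punctured N. eval_nexpr N (grad_sq_nexpr N k e) y = c * eucl_norm N y powr p"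
  shows "\<forall>y\<in>punctured N. eval_nexpr N (grad_sq_nexpr N (Suc k) e) y
           = c * (p * (p + real N - 2) / 2) * eucl_norm N y powr (p - 2)"
proof
  fix y assume y: "y \<in> punctured N"
  have "eval_nexpr N (grad_sq_nexpr N (Suc k) e) y = eval_nexpr N (laplacian_nexpr N (grad_sq_nexpr N k e)) y / 2"
    using eval_grad_sq_nexpr_Suc[OF assms(1) y] .
  also have "\<dots> = eval_nexpr N (laplacian_nexpr N (Times (Const c) (NormPowr p))) y / 2"
    using assms(2) y by (subst eval_laplacian_nexpr_cong[OF _ y]) auto
  finally show "eval_nexpr N (grad_sq_nexpr N (Suc k) e) y
      = c * (p * (p + real N - 2) / 2) * eucl_norm N y powr (p - 2)"
    by (simp add: eval_laplacian_scale eval_laplacian_NormPowr[OF y])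
qed

lemma eval_grad_sq_nexpr_add_powr:
  assumes "harmonic_nexpr N e"
    and "\<forall>y\<in>punctured N. eval_nexpr N (grad_sq_nexpr N k e) y = c * eucl_norm N y powr p"
  shows "\<forall>y\<in>punctured N. eval_nexpr N (grad_sq_nexpr N (k + m) e) y
           = c * (\<Prod>i<m. (p - 2 * real i) * (p - 2 * real i + real N - 2) / 2)
               * eucl_norm N y powr (p - 2 * real m)"
proof (induction m)
  case 0
  with assms(2) show ?case by simp
next
  case (Suc m)
  from eval_grad_sq_nexpr_Suc_powr[OF assms(1) Suc.IH] show ?case
    by (simp add: algebra_simps)
qed

lemma rescaled_grad_norm_square:
  assumes "x \<in> punctured N"
    and "eval_nexpr N (grad_sq_nexpr N k e) x = c * eucl_norm N x powr (- 2 * a)"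
  shows "(eucl_norm N x powr a * grad_norm N k (eval_nexpr N e) x)\<^sup>2 = c"
proof -
  let ?r = "eucl_norm N x"
  have "(?r powr a * grad_norm N k (eval_nexpr N e) x)\<^sup>2 = (?r powr a)\<^sup>2 * (c * ?r powr (- 2 * a))"
    using eval_grad_sq_nexpr_nonneg[of N k e x]
    by (simp add: grad_norm_eval_nexpr[OF assms(1)] power_mult_distrib assms(2))
  also have "\<dots> = c"
    using eucl_norm_pos[OF assms(1)] by (simp add: powr_add[symmetric] power2_eq_square)
  finally show ?thesis .
qed

lemma falling_Suc: "falling (a + 1) (Suc k) = (a + 1) * falling a k"
  unfolding falling_def by (subst prod.lessThan_Suc_shift) (simp add: algebra_simps)

lemma prod_fundamental_solution_eq_falling:
  "(\<Prod>i<k. (2 * (2 - real N) - 2 * real i) * (2 * (2 - real N) - 2 * real i + real N - 2) / 2)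
     = 2 ^ k * falling (real N / 2 + real k - 2) k * falling (real N + real k - 3) k"
proof (induction k)
  case (Suc k)
  define a where "a = real N / 2 + real k - 2"
  define b where "b = real N + real k - 3"
  have arg_a: "real N / 2 + real (Suc k) - 2 = a + 1" and arg_b: "real N + real (Suc k) - 3 = b + 1"
    by (simp_all add: a_def b_def)
  have factor: "(2 * (2 - real N) - 2 * real k) * (2 * (2 - real N) - 2 * real k + real N - 2) / 2
      = 2 * (a + 1) * (b + 1)"
    by (simp add: a_def b_def field_simps)
  show ?case
    unfolding prod.lessThan_Suc Suc.IH factor arg_a arg_b falling_Suc a_def[symmetric] b_def[symmetric]
    by (simp add: algebra_simps)
qed (simp add: falling_def)

lemma gamma_fundamental_solution:
  assumes "N \<ge> 1"
  shows "gamma N (2 - real N) k = 2 ^ k * falling (real N / 2 + real k - 2) k * falling (real N + real k - 3) k"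
proof -
  let ?s = "2 - real N"
  have "\<forall>y\<in>punctured N. eval_nexpr N (grad_sq_nexpr N 0 (NormPowr ?s)) y = 1 * eucl_norm N y powr (2 * ?s)"
    by (simp add: eval_grad_sq_nexpr multi_indices_0 powr_add[symmetric] power2_eq_square)
  from eval_grad_sq_nexpr_add_powr[OF harmonic_fundamental_solution this, where m = k]
  have "\<forall>y\<in>punctured N. eval_nexpr N (grad_sq_nexpr N k (NormPowr ?s)) y
      = 2 ^ k * falling (real N / 2 + real k - 2) k * falling (real N + real k - 3) k
          * eucl_norm N y powr (- 2 * (real k - ?s))"
    unfolding prod_fundamental_solution_eq_falling by (simp add: algebra_simps)
  moreover have "(\<lambda>y. eucl_norm N y powr ?s) = eval_nexpr N (NormPowr ?s)"
    by auto
  ultimately show ?thesis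
    unfolding gamma_def using assms by (simp add: the_const_on_punctured rescaled_grad_norm_square)
qed

lemma eval_grad_sq_nexpr_one_LnNorm:
  assumes "y \<in> punctured N"
  shows "eval_nexpr N (grad_sq_nexpr N 1 LnNorm) y = eucl_norm N y powr (-2)"
proof -
  let ?r = "eucl_norm N y"
  have "eval_nexpr N (grad_sq_nexpr N 1 LnNorm) y = ?r\<^sup>2 * (?r powr (-2))\<^sup>2"
    by (simp add: eval_grad_sq_nexpr sum_multi_indices_Suc multi_indices_0 power_mult_distrib
        power2_eucl_norm flip: sum_distrib_right)
  also have "\<dots> = ?r powr (-2)"
    using power2_mult_powr_diff[OF eucl_norm_pos[OF assms], of "-2"]
    by (simp add: power2_eq_square powr_add[symmetric])
  finally show ?thesis .
qed

lemma prod_ln_norm_eq_fact: "(\<Prod>i<m. (- 2 - 2 * real i) * (- 2 - 2 * real i + real 2 - 2) / 2) = 2 ^ m * (fact m)\<^sup>2"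
  by (induction m) (simp_all add: power2_eq_square algebra_simps)

lemma ell_2_Suc: "ell 2 (Suc m) = 2 ^ m * (fact m)\<^sup>2"
proof -
  have "\<forall>y\<in>punctured 2. eval_nexpr 2 (grad_sq_nexpr 2 1 LnNorm) y = 1 * eucl_norm 2 y powr (-2)"
    using eval_grad_sq_nexpr_one_LnNorm by simp
  from eval_grad_sq_nexpr_add_powr[OF harmonic_LnNorm this, where m = m]
  have "\<forall>y\<in>punctured 2. eval_nexpr 2 (grad_sq_nexpr 2 (Suc m) LnNorm) y
      = 2 ^ m * (fact m)\<^sup>2 * eucl_norm 2 y powr (- 2 * real (Suc m))"
    unfolding prod_ln_norm_eq_fact by (simp add: algebra_simps)
  moreover have "eucl_norm 2 y ^ Suc m = eucl_norm 2 y powr real (Suc m)" if "y \<in> punctured 2" for y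
    using eucl_norm_pos[OF that] by (rule powr_realpow[symmetric])
  moreover have "(\<lambda>y. ln (eucl_norm 2 y)) = eval_nexpr 2 LnNorm"
    by auto
  ultimately show ?thesis
    unfolding ell_def by (simp add: the_const_on_punctured rescaled_grad_norm_square)
qed

theorem theorem1p3:
  shows "(\<forall>(N::nat) (k::nat). N \<ge> 1 \<longrightarrow>
            gamma N (- (real N - 2)) k
              = 2 ^ k * falling (real N / 2 + real k - 2) k * falling (real N + real k - 3) k)
       \<and> (\<forall>k::nat. k \<ge> 1 \<longrightarrow> ell 2 k = 2 ^ (k - 1) * (fact (k - 1))\<^sup>2)"
proof (intro conjI allI impI)
  fix N k :: nat
  assume "N \<ge> 1"
  then show "gamma N (- (real N - 2)) k
      = 2 ^ k * falling (real N / 2 + real k - 2) k * falling (real N + real k - 3) k"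
    using gamma_fundamental_solution by simp
next
  fix k :: nat
  assume "k \<ge> 1"
  then obtain m where "k = Suc m"
    using not0_implies_Suc by fastforce
  then show "ell 2 k = 2 ^ (k - 1) * (fact (k - 1))\<^sup>2"
    by (simp add: ell_2_Suc)
qed

end
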